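(* Let $\Sigma,\Gamma$ be finite alphabets, each with at least two letters. For every infinite word $w\in\Sigma^{\mathbb{N}}$, $$\mathrm{ACE}_{\mathcal{I}}(w) = \sup_{h\in\mathcal{I}}\Big(\limsup_{n\to\infty}\sup\{\mathrm{E}(h(f)) : f\in\mathrm{Fact}_n(w)\}\Big).$$
   Context: $\mathrm{Fact}_n(w)$ is the set of length-$n$ factors of $w$. For a nonempty word $v$ and integer $p\ge0$, $v^{p/|v|}$ is the prefix of length $p$ of $vvv\cdots$. For a nonempty finite word $u$, $\mathrm{E}(u) = \sup\{ r \in \mathbb{Q} : u = v^r \text{ for some nonempty } v\}$. For an infinite word $w$, $\mathrm{ACE}(w) = \limsup_{n\to\infty}\sup\{\mathrm{E}(u) : u\in\mathrm{Fact}_n(w)\}$. $\mathcal{I}$ is the set of injective morphisms $\Sigma^*\to\Gamma^*$ and $\mathrm{ACE}_{\mathcal{I}}(w) = \sup\{\mathrm{ACE}(h(w)) : h\in\mathcal{I}\}$. *)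

theory Defs
  imports "HOL-Library.Extended_Real" "HOL-Library.Liminf_Limsup"
begin

definition Fact :: "nat \<Rightarrow> (nat \<Rightarrow> 'a) \<Rightarrow> 'a list set" where
  "Fact n w = {map w [i..<i+n] | i. True}"

text \<open>v^(p/|v|): the prefix of length p of vvv...\<close>
definition wpow :: "'a list \<Rightarrow> nat \<Rightarrow> 'a list" where
  "wpow v p = map (\<lambda>i. v ! (i mod length v)) [0..<p]"

definition Exp :: "'a list \<Rightarrow> ereal" where
  "Exp u = Sup {ereal (real p / real (length v)) | v p.
                  v \<noteq> [] \<and> u = wpow v p}"

definition ACE :: "(nat \<Rightarrow> 'a) \<Rightarrow> ereal" where
  "ACE w = limsup (\<lambda>n. Sup (Exp ` Fact n w))"

definition hom :: "('a \<Rightarrow> 'b list) \<Rightarrow> 'a list \<Rightarrow> 'b list" where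
  "hom h xs = concat (map h xs)"

text \<open>Image of an infinite word under a (nonerasing) morphism: the i-th letter of h(w)
  is the i-th letter of h(w_0 ... w_i) (correct whenever h is nonerasing, in particular
  whenever hom h is injective).\<close>
definition homw :: "('a \<Rightarrow> 'b list) \<Rightarrow> (nat \<Rightarrow> 'a) \<Rightarrow> nat \<Rightarrow> 'b" where
  "homw h w i = hom h (map w [0..<Suc i]) ! i"

text \<open>ACE over injective morphisms Sigma* -> Gamma*, Gamma given as the type 'b.\<close>
definition ACE_I :: "'b itself \<Rightarrow> (nat \<Rightarrow> 'a) \<Rightarrow> ereal" where
  "ACE_I _ w = Sup {ACE (homw h w) | h :: 'a \<Rightarrow> 'b list. inj (hom h)}"

end

(* For a nonerasing morphism h, the image h(f) of a factor f of w of length n is a factor of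
   h(w) of length at least n, so the right-hand limsup is at most ACE(h(w)).  Conversely, let
   L bound the lengths of the letter images.  A factor u of h(w) of length m >= 2L with period q
   contains the image h(f) of a factor f of w with |h(f)| > m - 2L, and h(f) inherits the period
   q, so E(h(f)) >= (m - 2L)/q, which is E(u) up to the factor 1 - 2L/m.  This factor tends to 1
   and |f| grows with m, so the two limsups agree for every injective h. *)

theory Submission
  imports Defs "HOL-Library.Sublist"
begin

lemma upt_split: "i \<le> j \<Longrightarrow> j \<le> k \<Longrightarrow> [i..<k] = [i..<j] @ [j..<k]"
  by (metis le_add_diff_inverse upt_add_eq_append)

lemma map_upt_in_Fact: "i \<le> k \<Longrightarrow> map x [i..<k] \<in> Fact (k - i) x"
  unfolding Fact_def by (intro CollectI exI[of _ i]) simp_all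

lemma length_Fact: "f \<in> Fact n w \<Longrightarrow> length f = n"
  by (auto simp: Fact_def)

lemma sublist_map_upt:
  assumes "j \<le> a" "a \<le> b" "b \<le> c"
  shows "sublist (map x [a..<b]) (map x [j..<c])"
proof -
  have "[j..<c] = [j..<a] @ [a..<b] @ [b..<c]"
    using assms upt_split[of j a c] upt_split[of a b c] by simp
  then show ?thesis by simp
qed

definition has_period :: "'a list \<Rightarrow> nat \<Rightarrow> bool" where
  "has_period u q \<longleftrightarrow> 0 < q \<and> (\<forall>i. i + q < length u \<longrightarrow> u ! i = u ! (i + q))"

lemma has_period_nth_mod:
  assumes "has_period u q" and "i < length u"
  shows "u ! i = u ! (i mod q)"
  using assms(2)
proof (induction i rule: less_induct)
  case (less i)
  show ?case
  proof (cases "i < q")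
    case False
    then have "u ! (i - q) = u ! i"
      using assms(1) less.prems by (auto simp: has_period_def dest: spec[of _ "i - q"])
    moreover have "(i - q) mod q = i mod q"
      using False by (simp add: le_mod_geq)
    ultimately show ?thesis
      using less.IH[of "i - q"] less.prems assms(1) False by (simp add: has_period_def)
  qed simp
qed

lemma has_period_sublist:
  assumes "has_period u q" and "sublist v u"
  shows "has_period v q"
proof -
  obtain ps ss where u: "u = ps @ v @ ss"
    using assms(2) by (auto simp: sublist_def)
  show ?thesis
    unfolding has_period_def
  proof (intro conjI allI impI)
    show "0 < q" using assms(1) by (simp add: has_period_def)
    fix i
    assume "i + q < length v"
    then have "length ps + i + q < length u"
      using u by simp
    then have "u ! (length ps + i) = u ! (length ps + i + q)"
      using assms(1) by (simp add: has_period_def)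
    then show "v ! i = v ! (i + q)"
      using u \<open>i + q < length v\<close> by (simp add: nth_append add.assoc)
  qed
qed

lemma Exp_ge_if_has_period:
  assumes "has_period u q"
  shows "ereal (real (length u) / real q) \<le> Exp u"
  unfolding Exp_def
proof (rule Sup_upper, intro CollectI exI conjI)
  let ?v = "map ((!) u) [0..<q]"
  show "?v \<noteq> []" using assms by (simp add: has_period_def)
  show "u = wpow ?v (length u)"
    using assms has_period_nth_mod[OF assms]
    by (intro nth_equalityI) (auto simp: wpow_def has_period_def)
  show "ereal (real (length u) / real q) = ereal (real (length u) / real (length ?v))"
    by simp
qed

lemma Exp_nonneg: "0 \<le> Exp u"
proof -
  have "has_period u (Suc (length u))"
    by (simp add: has_period_def)
  from Exp_ge_if_has_period[OF this] show ?thesis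
    by (rule order_trans[rotated]) simp
qed

lemma less_Exp_imp_has_period:
  assumes "a < Exp u"
  obtains q where "has_period u q" and "a < ereal (real (length u) / real q)"
proof -
  obtain v p where v: "v \<noteq> []" "u = wpow v p"
    and a: "a < ereal (real p / real (length v))"
    using assms unfolding Exp_def less_Sup_iff by blast
  have "has_period u (length v)" and "p = length u"
    using v by (auto simp: has_period_def wpow_def)
  with a that show ?thesis by blast
qed

lemma limsup_le_limsup_if_le_tail:
  fixes E F :: "nat \<Rightarrow> 'a::complete_linorder"
  assumes "\<And>n. F n \<le> (SUP m\<in>{n..}. E m)"
  shows "limsup F \<le> limsup E"
  unfolding limsup_INF_SUP
proof (rule INF_mono, intro bexI)
  fix N :: nat
  show "(SUP n\<in>{N..}. F n) \<le> (SUP m\<in>{N..}. E m)"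
    using order_trans[OF assms SUP_subset_mono[of "{_..}" "{N..}" E E]]
    by (auto intro!: SUP_least)
qed simp

lemma less_limsup_imp_exists_ge:
  fixes E :: "nat \<Rightarrow> 'a::complete_linorder"
  assumes "c < limsup E"
  obtains m where "M \<le> m" and "c < E m"
proof -
  have "\<not> eventually (\<lambda>m. E m \<le> c) sequentially"
  proof
    assume "eventually (\<lambda>m. E m \<le> c) sequentially"
    then have "limsup E \<le> c" by (rule Limsup_bounded)
    with assms show False by simp
  qed
  then have "\<forall>M. \<exists>m\<ge>M. c < E m"
    unfolding not_eventually frequently_sequentially not_le .
  with that show thesis by blast
qed

lemma le_mult_one_minus_div_if_large:
  fixes a b D x :: real
  assumes "0 < b" "b < a" "0 < x" "D * a / (a - b) \<le> x"
  shows "b \<le> a * (x - D) / x"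
proof -
  have "D * a \<le> x * (a - b)"
    using assms(2,4) by (simp add: pos_divide_le_eq)
  then have "b * x \<le> a * (x - D)"
    by (simp add: algebra_simps)
  then show ?thesis
    using assms(3) by (simp add: pos_le_divide_eq)
qed

lemma limsup_le_limsup_rescaled:
  fixes E F :: "nat \<Rightarrow> ereal" and D :: real
  assumes F_nonneg: "\<And>n. 0 \<le> F n"
    and approx: "\<And>m r. D \<le> real m \<Longrightarrow> 0 < r \<Longrightarrow> ereal r < E m \<Longrightarrow>
      \<exists>n. real m < D * real (Suc n) \<and> ereal (r * (real m - D) / real m) \<le> F n"
  shows "limsup E \<le> limsup F"
proof (rule ccontr)
  assume "\<not> limsup E \<le> limsup F"
  then have "limsup F < limsup E" by simp
  then obtain b where b: "limsup F < ereal b" "ereal b < limsup E"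
    using ereal_dense2 by blast
  obtain a where a: "ereal b < ereal a" "ereal a < limsup E"
    using ereal_dense2[OF b(2)] by blast
  have "0 \<le> limsup F"
    using F_nonneg by (intro le_Limsup) simp_all
  then have "0 < ereal b"
    using b(1) by (rule order.strict_trans1)
  then have "0 < b" by simp
  from a(1) have "b < a" by simp
  obtain N where N: "\<And>n. N \<le> n \<Longrightarrow> F n < ereal b"
    using Limsup_lessD[OF b(1)] by (auto simp: eventually_sequentially)
  define x where "x = max (D * real (Suc N)) (D * a / (a - b))"
  obtain m where m: "Suc (nat \<lceil>x\<rceil>) \<le> m" and Em: "ereal a < E m"
    using less_limsup_imp_exists_ge[OF a(2)] by blast
  have "x \<le> real (nat \<lceil>x\<rceil>)"
    by (rule real_nat_ceiling_ge)
  also have "\<dots> < real m"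
    using m by simp
  finally have m_large: "D * real (Suc N) \<le> real m" "D * a / (a - b) \<le> real m"
    by (simp_all add: x_def)
  have D_le: "D \<le> real m"
  proof (cases "D \<le> 0")
    case False
    then have "D \<le> D * real (Suc N)" by simp
    with m_large(1) show ?thesis by linarith
  qed simp
  have "0 < a"
    using \<open>0 < b\<close> \<open>b < a\<close> by simp
  then obtain n where n: "real m < D * real (Suc n)"
    and Fn: "ereal (a * (real m - D) / real m) \<le> F n"
    using approx[OF D_le _ Em] by blast
  have "0 < D * real (Suc n)"
    using n by linarith
  then have "0 < D"
    by (simp add: zero_less_mult_iff)
  have "N < n"
  proof (rule ccontr)
    assume "\<not> N < n"
    then have "D * real (Suc n) \<le> D * real (Suc N)"
      using \<open>0 < D\<close> by simp
    with n m_large(1) show False by linarith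
  qed
  with Fn N have "ereal (a * (real m - D) / real m) < ereal b"
    by (meson less_imp_le order.strict_trans1)
  moreover have "b \<le> a * (real m - D) / real m"
    using m m_large(2) \<open>0 < b\<close> \<open>b < a\<close>
    by (intro le_mult_one_minus_div_if_large) simp_all
  ultimately show False by simp
qed

lemma hom_Nil [simp]: "hom h [] = []"
  by (simp add: hom_def)

lemma hom_Cons [simp]: "hom h (a # xs) = h a @ hom h xs"
  by (simp add: hom_def)

lemma hom_append [simp]: "hom h (xs @ ys) = hom h xs @ hom h ys"
  by (simp add: hom_def)

definition nonerasing :: "('a \<Rightarrow> 'b list) \<Rightarrow> bool" where
  "nonerasing h \<longleftrightarrow> (\<forall>a. h a \<noteq> [])"

lemma nonerasing_length_pos: "nonerasing h \<Longrightarrow> 0 < length (h a)"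
  by (simp add: nonerasing_def)

lemma nonerasing_if_inj_hom:
  assumes "inj (hom h)"
  shows "nonerasing h"
  unfolding nonerasing_def
proof (intro allI notI)
  fix a
  assume "h a = []"
  then have "hom h [a] = hom h []" by simp
  with assms have "[a] = []" by (rule injD)
  then show False by simp
qed

lemma length_le_length_hom:
  assumes "nonerasing h"
  shows "length xs \<le> length (hom h xs)"
proof (induction xs)
  case (Cons a xs)
  with nonerasing_length_pos[OF assms, of a] show ?case
    by (simp del: length_greater_0_conv)
qed simp

lemma length_hom_le:
  assumes "\<And>a. length (h a) \<le> L"
  shows "length (hom h xs) \<le> length xs * L"
  using assms by (induction xs) (auto simp: add_mono)

definition hom_pos :: "('a \<Rightarrow> 'b list) \<Rightarrow> (nat \<Rightarrow> 'a) \<Rightarrow> nat \<Rightarrow> nat" where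
  "hom_pos h w k = length (hom h (map w [0..<k]))"

lemma hom_pos_0 [simp]: "hom_pos h w 0 = 0"
  by (simp add: hom_pos_def)

lemma hom_pos_Suc [simp]: "hom_pos h w (Suc k) = hom_pos h w k + length (h (w k))"
  by (simp add: hom_pos_def)

lemma strict_mono_hom_pos:
  assumes "nonerasing h"
  shows "strict_mono (hom_pos h w)"
  using nonerasing_length_pos[OF assms] by (simp add: strict_mono_Suc_iff)

lemma hom_pos_bracket:
  assumes "nonerasing h"
  shows "\<exists>k. hom_pos h w k \<le> t \<and> t < hom_pos h w (Suc k)"
proof (induction t)
  case 0
  show ?case
    using nonerasing_length_pos[OF assms, of "w 0"]
    by (intro exI[of _ 0]) (simp del: length_greater_0_conv)
next
  case (Suc t)
  then obtain k where k: "hom_pos h w k \<le> t" "t < hom_pos h w (Suc k)" by blast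
  show ?case
  proof (cases "Suc t < hom_pos h w (Suc k)")
    case True
    with k show ?thesis by (intro exI[of _ k]) simp
  next
    case False
    with k nonerasing_length_pos[OF assms, of "w (Suc k)"] show ?thesis
      by (intro exI[of _ "Suc k"]) (simp del: length_greater_0_conv)
  qed
qed

lemma hom_prefix_nth:
  assumes "i < hom_pos h w k" and "k \<le> k'"
  shows "hom h (map w [0..<k']) ! i = hom h (map w [0..<k]) ! i"
  using assms upt_split[of 0 k k'] by (simp add: hom_pos_def nth_append)

lemma homw_eq_nth_hom_prefix:
  assumes ne: "nonerasing h" and i: "i < hom_pos h w k"
  shows "homw h w i = hom h (map w [0..<k]) ! i"
proof -
  have "i < hom_pos h w (Suc i)"
    using length_le_length_hom[OF ne, of "map w [0..<Suc i]"] by (simp add: hom_pos_def)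
  then have "homw h w i = hom h (map w [0..<max k (Suc i)]) ! i"
    unfolding homw_def by (rule hom_prefix_nth[symmetric]) simp
  also have "\<dots> = hom h (map w [0..<k]) ! i"
    using i by (rule hom_prefix_nth) simp
  finally show ?thesis .
qed

lemma hom_factor_eq_window:
  assumes ne: "nonerasing h" and "i \<le> k"
  shows "hom h (map w [i..<k]) = map (homw h w) [hom_pos h w i..<hom_pos h w k]"
proof -
  have split: "hom h (map w [0..<k]) = hom h (map w [0..<i]) @ hom h (map w [i..<k])"
    using upt_split[of 0 i k] \<open>i \<le> k\<close> by simp
  then have len: "length (hom h (map w [i..<k])) = hom_pos h w k - hom_pos h w i"
    by (simp add: hom_pos_def)
  show ?thesis
  proof (rule nth_equalityI)
    fix p
    assume p: "p < length (hom h (map w [i..<k]))"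
    have "hom h (map w [i..<k]) ! p = hom h (map w [0..<k]) ! (hom_pos h w i + p)"
      by (simp add: split nth_append hom_pos_def)
    also have "\<dots> = homw h w (hom_pos h w i + p)"
      using p len by (intro homw_eq_nth_hom_prefix[OF ne, symmetric]) simp
    also have "\<dots> = map (homw h w) [hom_pos h w i..<hom_pos h w k] ! p"
      using p len by (simp only: nth_map_upt)
    finally show "hom h (map w [i..<k]) ! p
        = map (homw h w) [hom_pos h w i..<hom_pos h w k] ! p" .
  qed (simp only: len length_map length_upt)
qed

lemma hom_Fact_in_Fact_homw:
  assumes ne: "nonerasing h" and f: "f \<in> Fact n w"
  shows "hom h f \<in> Fact (length (hom h f)) (homw h w)"
proof -
  obtain i where f_eq: "f = map w [i..<i + n]"
    using f by (auto simp: Fact_def)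
  have "hom_pos h w i \<le> hom_pos h w (i + n)"
    using strict_mono_hom_pos[OF ne] by (simp add: strict_mono_less_eq)
  then show ?thesis
    unfolding f_eq hom_factor_eq_window[OF ne le_add1] by (simp add: map_upt_in_Fact)
qed

lemma Fact_homw_contains_hom_Fact:
  assumes ne: "nonerasing h" and L: "\<And>a. length (h a) \<le> L"
    and u: "u \<in> Fact m (homw h w)" and "L \<le> m"
  obtains n f where "f \<in> Fact n w" and "sublist (hom h f) u"
    and "m < length (hom h f) + 2 * L" and "length (hom h f) \<le> n * L"
proof -
  let ?s = "hom_pos h w"
  obtain j where u_eq: "u = map (homw h w) [j..<j + m]"
    using u by (auto simp: Fact_def)
  obtain i where i: "j \<le> ?s i" "?s i < j + L"
  proof -
    obtain k where k: "?s k \<le> j" "j < ?s (Suc k)"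
      using hom_pos_bracket[OF ne] by blast
    have step: "?s (Suc k) \<le> ?s k + L"
      using L[of "w k"] by simp
    show thesis
    proof (cases "?s k = j")
      case True
      with k step have "?s k < j + L" by linarith
      with True show thesis by (intro that) auto
    next
      case False
      with k step show thesis by (intro that[of "Suc k"]) auto
    qed
  qed
  obtain k where k: "?s k \<le> j + m" "j + m < ?s (Suc k)"
    using hom_pos_bracket[OF ne] by blast
  have "?s i < ?s (Suc k)"
    using i k \<open>L \<le> m\<close> by linarith
  then have "i < Suc k"
    using strict_mono_less[OF strict_mono_hom_pos[OF ne]] by blast
  then have "i \<le> k" by simp
  define f where "f = map w [i..<k]"
  have hf: "hom h f = map (homw h w) [?s i..<?s k]"
    unfolding f_def using hom_factor_eq_window[OF ne \<open>i \<le> k\<close>] .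
  show thesis
  proof (rule that)
    show "f \<in> Fact (k - i) w"
      unfolding f_def using \<open>i \<le> k\<close> by (rule map_upt_in_Fact)
    have "?s i \<le> ?s k"
      using strict_mono_hom_pos[OF ne] \<open>i \<le> k\<close> by (simp add: strict_mono_less_eq)
    then show "sublist (hom h f) u"
      unfolding hf u_eq using i k by (intro sublist_map_upt) auto
    show "m < length (hom h f) + 2 * L"
      using i k L[of "w k"] unfolding hf by simp
    show "length (hom h f) \<le> (k - i) * L"
      using length_hom_le[of h L f] L by (simp add: f_def)
  qed
qed

lemma Exp_hom_Fact_ge_rescaled:
  assumes ne: "nonerasing h" and L: "\<And>a. length (h a) \<le> L"
    and u: "u \<in> Fact m (homw h w)" and m: "2 * L \<le> m"
    and r: "0 < r" "ereal r < Exp u"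
  obtains n f where "f \<in> Fact n w" and "real m < 2 * real L * real (Suc n)"
    and "ereal (r * (real m - 2 * real L) / real m) \<le> Exp (hom h f)"
proof -
  obtain q where q: "has_period u q" and rq: "r < real m / real q"
    using less_Exp_imp_has_period[OF r(2)] length_Fact[OF u] by auto
  have "L \<le> m"
    using m by simp
  then obtain n f where f: "f \<in> Fact n w" and sub: "sublist (hom h f) u"
    and long: "m < length (hom h f) + 2 * L" and short: "length (hom h f) \<le> n * L"
    using Fact_homw_contains_hom_Fact[OF ne L u] by blast
  show thesis
  proof (rule that[OF f])
    have "m < 2 * L * Suc n"
      using long short by (simp add: algebra_simps)
    then show "real m < 2 * real L * real (Suc n)"
      by (metis of_nat_less_iff of_nat_mult of_nat_numeral)
    have "0 < q" using q by (simp add: has_period_def)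
    with rq have "r * real q < real m"
      by (simp add: pos_less_divide_eq)
    moreover have "0 < r * real q"
      using r(1) \<open>0 < q\<close> by simp
    ultimately have "0 < real m" by linarith
    have "r * real q * (real m - 2 * real L) \<le> real m * (real m - 2 * real L)"
      using \<open>r * real q < real m\<close> m by (intro mult_right_mono) auto
    then have "r * (real m - 2 * real L) / real m \<le> (real m - 2 * real L) / real q"
      using \<open>0 < real m\<close> \<open>0 < q\<close> by (simp add: field_simps)
    also have "\<dots> \<le> real (length (hom h f)) / real q"
      using long \<open>0 < q\<close> by (simp add: divide_right_mono)
    finally show "ereal (r * (real m - 2 * real L) / real m) \<le> Exp (hom h f)"
      using Exp_ge_if_has_period[OF has_period_sublist[OF q sub]]
      by (meson ereal_less_eq(3) order_trans)
  qed
qed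

lemma limsup_Exp_hom_le_ACE_homw:
  assumes ne: "nonerasing h"
  shows "limsup (\<lambda>n. Sup ((\<lambda>f. Exp (hom h f)) ` Fact n w)) \<le> ACE (homw h w)"
  unfolding ACE_def
proof (rule limsup_le_limsup_if_le_tail)
  fix n
  show "Sup ((\<lambda>f. Exp (hom h f)) ` Fact n w)
      \<le> (SUP m\<in>{n..}. Sup (Exp ` Fact m (homw h w)))"
  proof (rule SUP_least)
    fix f
    assume f: "f \<in> Fact n w"
    have "Exp (hom h f) \<le> Sup (Exp ` Fact (length (hom h f)) (homw h w))"
      using hom_Fact_in_Fact_homw[OF ne f] by (rule SUP_upper)
    also have "\<dots> \<le> (SUP m\<in>{n..}. Sup (Exp ` Fact m (homw h w)))"
      using length_le_length_hom[OF ne, of f] length_Fact[OF f] by (intro SUP_upper) simp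
    finally show "Exp (hom h f) \<le> (SUP m\<in>{n..}. Sup (Exp ` Fact m (homw h w)))" .
  qed
qed

lemma ACE_homw_le_limsup_Exp_hom:
  fixes h :: "'a::finite \<Rightarrow> 'b list"
  assumes ne: "nonerasing h"
  shows "ACE (homw h w) \<le> limsup (\<lambda>n. Sup ((\<lambda>f. Exp (hom h f)) ` Fact n w))"
proof -
  obtain L where L: "\<And>a. length (h a) \<le> L"
    using finite_nat_set_iff_bounded_le[of "range (\<lambda>a. length (h a))"] by auto
  show ?thesis
    unfolding ACE_def
  proof (rule limsup_le_limsup_rescaled[where D = "2 * real L"])
    fix n
    have "map w [0..<n] \<in> Fact n w"
      using map_upt_in_Fact[of 0 n w] by simp
    then show "0 \<le> Sup ((\<lambda>f. Exp (hom h f)) ` Fact n w)"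
      using Exp_nonneg by (meson SUP_upper2)
  next
    fix m r
    assume m: "2 * real L \<le> real m"
      and r: "0 < r" "ereal r < Sup (Exp ` Fact m (homw h w))"
    then obtain u where u: "u \<in> Fact m (homw h w)" and ru: "ereal r < Exp u"
      unfolding less_SUP_iff by blast
    have "real (2 * L) \<le> real m"
      using m by simp
    then have "2 * L \<le> m"
      by (simp only: of_nat_le_iff)
    then obtain n f where f: "f \<in> Fact n w" and "real m < 2 * real L * real (Suc n)"
      and "ereal (r * (real m - 2 * real L) / real m) \<le> Exp (hom h f)"
      using Exp_hom_Fact_ge_rescaled[OF ne L u _ r(1) ru] by blast
    moreover have "Exp (hom h f) \<le> Sup ((\<lambda>f. Exp (hom h f)) ` Fact n w)"
      using f by (rule SUP_upper)
    ultimately show "\<exists>n. real m < 2 * real L * real (Suc n)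
        \<and> ereal (r * (real m - 2 * real L) / real m)
          \<le> Sup ((\<lambda>f. Exp (hom h f)) ` Fact n w)"
      by (meson order_trans)
  qed
qed

theorem theorem19:
  fixes w :: "nat \<Rightarrow> 'a::finite"
  assumes "card (UNIV :: 'a set) \<ge> 2" and "card (UNIV :: 'b::finite set) \<ge> 2"
  shows "ACE_I TYPE('b) w =
    Sup {limsup (\<lambda>n. Sup ((\<lambda>f. Exp (hom h f)) ` Fact n w)) | h :: 'a \<Rightarrow> 'b list. inj (hom h)}"
proof -
  have "ACE (homw h w) = limsup (\<lambda>n. Sup ((\<lambda>f. Exp (hom h f)) ` Fact n w))"
    if "inj (hom h)" for h :: "'a \<Rightarrow> 'b list"
    using nonerasing_if_inj_hom[OF that]
    by (intro antisym ACE_homw_le_limsup_Exp_hom limsup_Exp_hom_le_ACE_homw)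
  then show ?thesis
    unfolding ACE_I_def by (metis (mono_tags, lifting))
qed

end
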